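(* If $x\in\mathbb R^n$ satisfies $Ax\le\tilde b$ for every $\tilde b\in B_1\times\cdots\times B_m$, then there exists $w\in\mathcal W$ such that $x=x(w)$. That is, $$\{x: Ax\le\tilde b\ \ \forall\tilde b\in B_1\times\cdots\times B_m\}\subseteq\{x(w):w\in\mathcal W\}.$$
   Context: $A\in\mathbb R^{m\times n}$ (rows $a_i^\top$) has full column rank $n\le m$, $b^{(0)}\in\mathbb R^m$, and $\{x:Ax\le b^{(0)}\}$ is bounded with nonempty interior. For $w\in\mathbb R^m_{++}$, the weighted center $(x(w),y(w),s(w))$ is the unique solution of $Ax+s=b^{(0)}$, $s>0$, $A^\top y=0$, $\mathrm{Diag}(s)y=w$. For each $i$, $\Delta b_i=(\Delta b_i^1,\dots,\Delta b_i^{N_i})$ is a nonzero vector with nonnegative entries and $B_i=\{b_i^{(0)}+\sum_{l=1}^{N_i}\Delta b_i^lz^l: z\in[-1,1]^{N_i}\}$. $\mathcal W=\{w\in\mathbb R^m_{++}: \sum_iw_i=1,\ y_i(w)\|\Delta b_i\|_1\le w_i<1\ \forall i\}$. *)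

theory Defs
  imports "HOL-Analysis.Analysis"
begin

definition is_wcenter ::
  "real^'n^'m \<Rightarrow> real^'m \<Rightarrow> real^'m \<Rightarrow> real^'n \<Rightarrow> real^'m \<Rightarrow> real^'m \<Rightarrow> bool" where
  "is_wcenter A b0 w x y s \<longleftrightarrow>
     A *v x + s = b0 \<and> (\<forall>i. s $ i > 0) \<and> transpose A *v y = 0 \<and> (\<forall>i. s $ i * y $ i = w $ i)"

definition wcenter :: "real^'n^'m \<Rightarrow> real^'m \<Rightarrow> real^'m \<Rightarrow> (real^'n) \<times> (real^'m) \<times> (real^'m)" where
  "wcenter A b0 w = (THE (x, y, s). is_wcenter A b0 w x y s)"

definition wx :: "real^'n^'m \<Rightarrow> real^'m \<Rightarrow> real^'m \<Rightarrow> real^'n" where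
  "wx A b0 w = fst (wcenter A b0 w)"

definition wy :: "real^'n^'m \<Rightarrow> real^'m \<Rightarrow> real^'m \<Rightarrow> real^'m" where
  "wy A b0 w = fst (snd (wcenter A b0 w))"

text \<open>Delta b_i = (Db i 1, ..., Db i (N i)); its 1-norm.\<close>
definition dnorm1 :: "('m \<Rightarrow> nat) \<Rightarrow> ('m \<Rightarrow> nat \<Rightarrow> real) \<Rightarrow> 'm \<Rightarrow> real" where
  "dnorm1 N Db i = (\<Sum>l\<in>{1..N i}. \<bar>Db i l\<bar>)"

definition Bset :: "real^'m \<Rightarrow> ('m \<Rightarrow> nat) \<Rightarrow> ('m \<Rightarrow> nat \<Rightarrow> real) \<Rightarrow> 'm \<Rightarrow> real set" where
  "Bset b0 N Db i = {b0 $ i + (\<Sum>l\<in>{1..N i}. Db i l * z l) | z.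
                       \<forall>l\<in>{1..N i}. -1 \<le> z l \<and> z l \<le> 1}"

definition Wset :: "real^'n^'m \<Rightarrow> real^'m \<Rightarrow> ('m \<Rightarrow> nat) \<Rightarrow> ('m \<Rightarrow> nat \<Rightarrow> real) \<Rightarrow> (real^'m) set" where
  "Wset A b0 N Db = {w. (\<forall>i. w $ i > 0) \<and> (\<Sum>i\<in>UNIV. w $ i) = 1 \<and>
      (\<forall>i. wy A b0 w $ i * dnorm1 N Db i \<le> w $ i \<and> w $ i < 1)}"

end

theory Submission
  imports Defs
begin

text \<open>
  Taking every z = -1 shows that a robustly feasible x satisfies A x \<le> b0 - d with
  d_i = |Delta b_i|_1, so its slack s = b0 - A x dominates d. Boundedness of the polyhedron
  means that A v \<ge> 0 forces v = 0, so by Stiemke's alternative there is a dual vector y > 0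
  with A^T y = 0. Scaling y so that s^T y = 1 and putting w_i = s_i y_i makes (x, y, s) the
  weighted center for w and gives y_i d_i \<le> y_i s_i = w_i. Finally w_i < 1 because an
  injective A with a positive vector in the kernel of A^T must have at least two rows.
\<close>

lemma transpose_mult_eq_0_iff:
  fixes A :: "real^'n^'m"
  shows "transpose A *v y = 0 \<longleftrightarrow> (\<forall>v. inner y (A *v v) = 0)"
  by (metis dot_lmul_matrix inner_eq_zero_iff inner_zero_left transpose_matrix_vector)

lemma is_wcenter_unique:
  fixes A :: "real^'n^'m"
  assumes c1: "is_wcenter A b0 w x1 y1 s1" and c2: "is_wcenter A b0 w x2 y2 s2"
    and w_pos: "\<forall>i. 0 < w $ i" and inj: "inj ((*v) A)"
  shows "x1 = x2 \<and> y1 = y2 \<and> s1 = s2"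
proof -
  have e1: "A *v x1 + s1 = b0" "\<forall>i. 0 < s1 $ i" "transpose A *v y1 = 0" "\<forall>i. s1 $ i * y1 $ i = w $ i"
    using c1 by (auto simp: is_wcenter_def)
  have e2: "A *v x2 + s2 = b0" "\<forall>i. 0 < s2 $ i" "transpose A *v y2 = 0" "\<forall>i. s2 $ i * y2 $ i = w $ i"
    using c2 by (auto simp: is_wcenter_def)
  have y_eq: "y1 $ i = w $ i / s1 $ i" "y2 $ i = w $ i / s2 $ i" for i
    using e1(2,4) e2(2,4) by (metis nonzero_mult_div_cancel_left less_irrefl)+
  \<comment> \<open>s1 - s2 lies in the range of A and y1 - y2 in the kernel of A^T, so they are orthogonal;
      but each term (y1 - y2)_i (s1 - s2)_i = -w_i (s1 - s2)_i^2 / (s1_i s2_i) is nonpositive.\<close>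
  have "s1 - s2 = A *v (x2 - x1)"
    using e1(1) e2(1) by (simp add: matrix_vector_mult_diff_distrib algebra_simps)
  moreover have "transpose A *v (y1 - y2) = 0"
    using e1(3) e2(3) by (simp add: matrix_vector_mult_diff_distrib)
  ultimately have "inner (y1 - y2) (s1 - s2) = 0"
    by (metis transpose_mult_eq_0_iff)
  moreover have "(y1 $ i - y2 $ i) * (s1 $ i - s2 $ i) = - (w $ i * (s1 $ i - s2 $ i)\<^sup>2 / (s1 $ i * s2 $ i))" for i
    using e1(2)[rule_format, of i] e2(2)[rule_format, of i] unfolding y_eq
    by (simp add: field_simps power2_eq_square)
  ultimately have "(\<Sum>i\<in>UNIV. w $ i * (s1 $ i - s2 $ i)\<^sup>2 / (s1 $ i * s2 $ i)) = 0"
    by (simp add: inner_vec_def sum_negf)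
  moreover have "0 \<le> w $ i * (s1 $ i - s2 $ i)\<^sup>2 / (s1 $ i * s2 $ i)" for i
    using w_pos e1(2) e2(2) by (simp add: less_imp_le)
  ultimately have "\<forall>i. w $ i * (s1 $ i - s2 $ i)\<^sup>2 / (s1 $ i * s2 $ i) = 0"
    by (simp add: sum_nonneg_eq_0_iff)
  then have s_eq: "s1 = s2"
    using w_pos e1(2) e2(2) by (auto simp: vec_eq_iff) (metis less_irrefl)
  then have "y1 = y2"
    by (simp add: vec_eq_iff y_eq)
  moreover have "x1 = x2"
    using e1(1) e2(1) s_eq inj by (metis add_right_cancel injD)
  ultimately show ?thesis using s_eq by simp
qed

lemma wcenter_eqI:
  fixes A :: "real^'n^'m"
  assumes "is_wcenter A b0 w x y s" and "\<forall>i. 0 < w $ i" and "inj ((*v) A)"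
  shows "wcenter A b0 w = (x, y, s)"
  unfolding wcenter_def
proof (rule the_equality)
  fix z assume "case z of (x, y, s) \<Rightarrow> is_wcenter A b0 w x y s"
  then show "z = (x, y, s)"
    using is_wcenter_unique[OF _ assms] by (cases z) auto
qed (use assms in simp)

lemma normalized_weight_of_strictly_feasible:
  fixes A :: "real^'n^'m"
  assumes inj: "inj ((*v) A)" and slack: "A *v x + s = b0" and s_pos: "\<forall>i. 0 < s $ i"
    and y_pos: "\<forall>i. 0 < y $ i" and kernel: "transpose A *v y = 0"
  obtains w where "\<forall>i. 0 < w $ i" and "(\<Sum>i\<in>UNIV. w $ i) = 1" and "wx A b0 w = x"
    and "\<forall>i. 0 < wy A b0 w $ i" and "\<forall>i. w $ i = s $ i * wy A b0 w $ i"
proof -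
  define y' where "y' = (1 / (\<Sum>i\<in>UNIV. s $ i * y $ i)) *\<^sub>R y"
  define w where "w = (\<chi> i. s $ i * y' $ i)"
  have "0 < (\<Sum>i\<in>UNIV. s $ i * y $ i)" by (rule sum_pos) (use s_pos y_pos in auto)
  then have y'_pos: "\<forall>i. 0 < y' $ i" and w_pos: "\<forall>i. 0 < w $ i"
    and w_sum: "(\<Sum>i\<in>UNIV. w $ i) = 1"
    using y_pos s_pos by (simp_all add: y'_def w_def sum_divide_distrib[symmetric])
  have "is_wcenter A b0 w x y' s"
    using slack s_pos kernel by (simp add: is_wcenter_def w_def y'_def matrix_vector_mult_scaleR)
  then have "wcenter A b0 w = (x, y', s)" using wcenter_eqI w_pos inj by blast
  then show ?thesis
    using that[of w] w_pos w_sum y'_pos by (simp add: wx_def wy_def w_def)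
qed

lemma bounded_polyhedron_no_recession:
  fixes A :: "real^'n^'m"
  assumes bdd: "bounded {u. \<forall>i. (A *v u) $ i \<le> b $ i}"
    and x: "\<forall>i. (A *v x) $ i \<le> b $ i"
    and v: "\<forall>i. 0 \<le> (A *v v) $ i"
  shows "v = 0"
proof (rule ccontr)
  assume "v \<noteq> 0"
  then have nv: "0 < norm v" by simp
  obtain B where B: "\<And>u. \<forall>i. (A *v u) $ i \<le> b $ i \<Longrightarrow> norm u \<le> B"
    using bdd by (auto simp: bounded_iff)
  define t where "t = (B + norm x + 1) / norm v"
  have "0 \<le> B" using B[OF x] norm_ge_zero order_trans by blast
  then have t_pos: "0 \<le> t" and norm_tv: "norm (t *\<^sub>R v) = B + norm x + 1"
    using nv by (simp_all add: t_def)
  have "(A *v (x - t *\<^sub>R v)) $ i \<le> b $ i" for i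
  proof -
    have "(A *v (x - t *\<^sub>R v)) $ i = (A *v x) $ i - t * (A *v v) $ i"
      by (simp add: matrix_vector_mult_diff_distrib matrix_vector_mult_scaleR)
    moreover have "0 \<le> t * (A *v v) $ i" using t_pos v by simp
    ultimately show ?thesis using x[rule_format, of i] by linarith
  qed
  then have "norm (x - t *\<^sub>R v) \<le> B" using B by blast
  moreover have "norm (t *\<^sub>R v) \<le> norm (x - t *\<^sub>R v) + norm x"
    by (metis norm_minus_commute norm_triangle_sub add.commute)
  ultimately show False using norm_tv by linarith
qed

lemma convex_hull_axes_subset_simplex:
  "convex hull (range (\<lambda>i. axis i (1::real) :: real^'m))
     \<subseteq> {p. (\<forall>i. 0 \<le> p $ i) \<and> (\<Sum>i\<in>UNIV. p $ i) = 1}"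
proof (rule hull_minimal)
  show "convex {p::real^'m. (\<forall>i. 0 \<le> p $ i) \<and> (\<Sum>i\<in>UNIV. p $ i) = 1}"
    unfolding convex_def by (auto simp: sum.distrib sum_distrib_left[symmetric])
qed (auto simp: axis_def)

lemma stiemke_alternative:
  fixes A :: "real^'n^'m"
  assumes no_semipositive: "\<And>v. \<forall>i. 0 \<le> (A *v v) $ i \<Longrightarrow> A *v v = 0"
  shows "\<exists>y. (\<forall>i. 0 < y $ i) \<and> transpose A *v y = 0"
proof -
  define S where "S = convex hull (range (\<lambda>i. axis i (1::real) :: real^'m))"
  define T where "T = range ((*v) A)"
  have S_simplex: "S \<subseteq> {p. (\<forall>i. 0 \<le> p $ i) \<and> (\<Sum>i\<in>UNIV. p $ i) = 1}"
    unfolding S_def by (rule convex_hull_axes_subset_simplex)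
  have "S \<inter> T = {}"
  proof (rule ccontr)
    assume "S \<inter> T \<noteq> {}"
    then obtain v where "\<forall>i. 0 \<le> (A *v v) $ i" "(\<Sum>i\<in>UNIV. (A *v v) $ i) = 1"
      using S_simplex unfolding T_def by blast
    then show False using no_semipositive by force
  qed
  moreover have "convex S" "compact S" "S \<noteq> {}"
    unfolding S_def by (auto simp: convex_convex_hull compact_convex_hull finite_imp_compact)
  moreover have "convex T" "closed T"
    unfolding T_def by (auto intro!: convex_linear_image
        simp: closed_subspace linear_subspace_image matrix_vector_mul_linear)
  ultimately obtain a b where sep: "\<forall>p\<in>S. inner a p < b" "\<forall>u\<in>T. b < inner a u"
    using separating_hyperplane_compact_closed by metis
  \<comment> \<open>A linear functional bounded below on the subspace T vanishes on it.\<close>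
  have a_orth: "inner a (A *v v) = 0" for v
  proof (rule ccontr)
    assume ne: "inner a (A *v v) \<noteq> 0"
    have "A *v (((b - 1) / inner a (A *v v)) *\<^sub>R v) \<in> T" unfolding T_def by simp
    then show False
      using sep(2) ne by (auto simp: matrix_vector_mult_scaleR)
  qed
  have b_neg: "b < 0"
    using sep(2) a_orth[of 0] unfolding T_def by (metis rangeI)
  have "0 < - a $ i" for i
  proof -
    have "axis i 1 \<in> S" unfolding S_def by (rule hull_inc) auto
    then show ?thesis using sep(1) b_neg by (force simp: inner_axis)
  qed
  moreover have "transpose A *v (- a) = 0"
    unfolding transpose_mult_eq_0_iff using a_orth by simp
  ultimately show ?thesis by (intro exI[of _ "- a"]) auto
qed

lemma exists_other_index_of_positive_kernel:
  fixes A :: "real^'n^'m" and i :: 'm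
  assumes inj: "inj ((*v) A)" and y_pos: "\<forall>j. 0 < y $ j" and kernel: "transpose A *v y = 0"
  shows "\<exists>j. j \<noteq> i"
proof (rule ccontr)
  assume "\<nexists>j. j \<noteq> i"
  then have single: "\<And>j. j = i" by blast
  \<comment> \<open>With a single row, A^T y = 0 and y > 0 force A = 0, which is not injective.\<close>
  have "A *v v = 0" for v
  proof -
    have univ: "UNIV = {i}" using single by auto
    have "inner y (A *v v) = y $ i * (A *v v) $ i"
      unfolding inner_vec_def univ by simp
    moreover have "inner y (A *v v) = 0"
      using kernel unfolding transpose_mult_eq_0_iff by blast
    ultimately have "(A *v v) $ i = 0"
      using y_pos by (metis less_irrefl mult_eq_0_iff)
    then show ?thesis
      by (subst vec_eq_iff) (metis single zero_index)
  qed
  then have "A *v axis undefined (1::real) = A *v 0" by simp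
  then have "axis undefined (1::real) = (0::real^'n)"
    by (rule injD[OF inj])
  then show False by (simp add: axis_eq_0_iff)
qed

lemma component_lt_one:
  fixes w :: "real^'m"
  assumes "\<forall>k. 0 < w $ k" and "(\<Sum>k\<in>UNIV. w $ k) = 1" and "j \<noteq> i"
  shows "w $ i < 1"
proof -
  have "w $ j \<le> (\<Sum>k\<in>UNIV - {i}. w $ k)"
    by (rule member_le_sum) (use assms in \<open>auto intro: less_imp_le\<close>)
  moreover have "(\<Sum>k\<in>UNIV. w $ k) = w $ i + (\<Sum>k\<in>UNIV - {i}. w $ k)"
    by (simp add: sum.remove)
  ultimately show ?thesis using assms by (metis add_less_cancel_left add.right_neutral order_less_le_trans)
qed

lemma dnorm1_pos:
  assumes "\<exists>l\<in>{1..N i}. Db i l \<noteq> 0"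
  shows "0 < dnorm1 N Db i"
proof -
  obtain l where l: "l \<in> {1..N i}" "Db i l \<noteq> 0" using assms by blast
  have "\<bar>Db i l\<bar> \<le> (\<Sum>l\<in>{1..N i}. \<bar>Db i l\<bar>)"
    by (rule member_le_sum) (use l in auto)
  then show ?thesis using l by (simp add: dnorm1_def)
qed

lemma lower_end_in_Bset:
  assumes "\<And>l. l \<in> {1..N i} \<Longrightarrow> 0 \<le> Db i l"
  shows "b0 $ i - dnorm1 N Db i \<in> Bset b0 N Db i"
proof -
  have "(\<Sum>l\<in>{1..N i}. Db i l * -1) = - dnorm1 N Db i"
    using assms by (simp add: dnorm1_def sum_negf)
  then show ?thesis
    unfolding Bset_def by (auto intro!: exI[of _ "\<lambda>_. -1"])
qed

theorem propositionC1:
  fixes A :: "real^'n^'m" and b0 :: "real^'m"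
    and N :: "'m \<Rightarrow> nat" and Db :: "'m \<Rightarrow> nat \<Rightarrow> real"
    and x :: "real^'n"
  assumes rankA: "rank A = CARD('n)"
    and nm: "CARD('n) \<le> CARD('m)"
    and bdd: "bounded {v. \<forall>i. (A *v v) $ i \<le> b0 $ i}"
    and int: "interior {v. \<forall>i. (A *v v) $ i \<le> b0 $ i} \<noteq> {}"
    and Db_nonneg: "\<And>i l. l \<in> {1..N i} \<Longrightarrow> Db i l \<ge> 0"
    and Db_nonzero: "\<And>i. \<exists>l\<in>{1..N i}. Db i l \<noteq> 0"
    and robust: "\<And>bt :: real^'m. (\<forall>i. bt $ i \<in> Bset b0 N Db i) \<Longrightarrow> (\<forall>i. (A *v x) $ i \<le> bt $ i)"
  shows "\<exists>w\<in>Wset A b0 N Db. x = wx A b0 w"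
proof -
  have inj: "inj ((*v) A)" using rankA full_rank_injective by blast
  define s where "s = b0 - A *v x"
  then have slack: "A *v x + s = b0" by simp
  have "\<forall>i. (A *v x) $ i \<le> (\<chi> i. b0 $ i - dnorm1 N Db i) $ i"
    by (rule robust) (simp, blast intro: lower_end_in_Bset Db_nonneg)
  then have s_ge: "dnorm1 N Db i \<le> s $ i" for i
    unfolding s_def by (simp add: le_diff_eq add.commute)
  have s_pos: "\<forall>i. 0 < s $ i"
    using s_ge dnorm1_pos[of N _ Db] Db_nonzero by (meson less_le_trans)
  then have "\<forall>i. (A *v x) $ i \<le> b0 $ i" by (simp add: s_def less_imp_le)
  then have "\<And>v. \<forall>i. 0 \<le> (A *v v) $ i \<Longrightarrow> A *v v = 0"
    using bounded_polyhedron_no_recession[OF bdd] by (metis matrix_vector_mult_0_right)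
  then obtain y where y_pos: "\<forall>i. 0 < y $ i" and kernel: "transpose A *v y = 0"
    using stiemke_alternative by blast
  obtain w where w_pos: "\<forall>i. 0 < w $ i" and w_sum: "(\<Sum>i\<in>UNIV. w $ i) = 1"
    and x_eq: "wx A b0 w = x" and wy_pos: "\<forall>i. 0 < wy A b0 w $ i"
    and w_eq: "\<forall>i. w $ i = s $ i * wy A b0 w $ i"
    using normalized_weight_of_strictly_feasible[OF inj slack s_pos y_pos kernel] by blast
  have "w $ i < 1" for i
  proof -
    obtain j where "j \<noteq> i" using exists_other_index_of_positive_kernel[OF inj y_pos kernel] by blast
    then show ?thesis using component_lt_one w_pos w_sum by blast
  qed
  moreover have "wy A b0 w $ i * dnorm1 N Db i \<le> w $ i" for i
    using s_ge[of i] wy_pos w_eq by (simp add: mult_left_mono mult.commute)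
  ultimately show ?thesis
    unfolding Wset_def using w_pos w_sum x_eq by force
qed

end
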